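(* Let $A\in\mathbb{R}^{m\times n}$, $b\in\mathbb{R}^m$. Let $H=AA^T$, or, if $A$ is (square) symmetric positive semidefinite, $H=A$. Let $\lambda_{\max}$, $\kappa^+$ and $c(H)=1/(\kappa^+\lambda_{\max})$ be as in the context. Given $w_0\in\mathbb{R}^m$, set $x_0=A^Tw_0$, $r_0=b-Ax_0$, and for $k\ge1$ (as long as $Hr_{k-1}\ne0$) set $r_k=F_1(r_{k-1})$ and $$x_k=x_{k-1}+\alpha_{1,1}(r_{k-1})\,r_{k-1}\ \text{ if } H=A,\qquad x_k=x_{k-1}+\alpha_{1,1}(r_{k-1})\,A^Tr_{k-1}\ \text{ if } H=AA^T,$$ where $\alpha_{1,1}(r)=r^THr/r^TH^2r$. Suppose $k\ge1$ and $Hr_j\neq0$ for $j=0,\dots,k-1$. Then: (I) $r_k=b-Ax_k$. (II) If $Ax=b$ is solvable, $\|r_k\|\le\left(\frac{\kappa^+-1}{\kappa^++1}\right)^k\|r_0\|$. (III) If $Ax=b$ is solvable and $\varepsilon\in(0,1)$, then $\|r_k\|\le\varepsilon$ whenever $k\ge\kappa^+\ln(\|r_0\|/\varepsilon)$. (IV) Regardless of solvability, $\|r_k\|^2\le\|r_0\|^2-c(H)\sum_{j=0}^{k-1}r_j^THr_j$. (V) Regardless of solvability, if $\varepsilon\in(0,1)$ and $r_j^THr_j>\varepsilon$ for all $j=0,\dots,k-1$, then $k\le\kappa^+\lambda_{\max}\|r_0\|^2/\varepsilon$. (VI) If $\|r_k\|\le\varepsilon$ then $\|Ax_k-b\|\le\varepsilon$;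 if $r_k^THr_k\le\varepsilon$ then $\|A^TAx_k-A^Tb\|\le\sqrt{\varepsilon}$ when $H=AA^T$, and $\|A^TAx_k-A^Tb\|\le\sqrt{\varepsilon}\,\|A\|^{1/2}$ when $H=A$.
   Context: Norms are Euclidean; $\|A\|$ is the operator 2-norm. $\lambda_{\max}$ is the largest eigenvalue of $H$ and $\kappa^+$ is the ratio of the largest eigenvalue of $H$ to its smallest positive eigenvalue. For $r$ with $Hr\ne0$, $F_1(r)=r-\frac{r^THr}{r^TH^2r}Hr$. *)

theory Defs
  imports "HOL-Analysis.Analysis"
begin

definition eigvals :: "real^'m^'m \<Rightarrow> real set" where
  "eigvals H = {l. \<exists>v. v \<noteq> 0 \<and> H *v v = l *\<^sub>R v}"

definition lambda_max :: "real^'m^'m \<Rightarrow> real" where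
  "lambda_max H = Max (eigvals H)"

definition kappa_plus :: "real^'m^'m \<Rightarrow> real" where
  "kappa_plus H = lambda_max H / Min {l \<in> eigvals H. l > 0}"

definition c_H :: "real^'m^'m \<Rightarrow> real" where
  "c_H H = 1 / (kappa_plus H * lambda_max H)"

definition sym_psd :: "real^'m^'m \<Rightarrow> bool" where
  "sym_psd A \<longleftrightarrow> transpose A = A \<and> (\<forall>x. 0 \<le> x \<bullet> (A *v x))"

definition F1 :: "real^'m^'m \<Rightarrow> real^'m \<Rightarrow> real^'m" where
  "F1 H r = r - ((r \<bullet> (H *v r)) / (r \<bullet> ((H ** H) *v r))) *\<^sub>R (H *v r)"

definition alpha11 :: "real^'m^'m \<Rightarrow> real^'m \<Rightarrow> real" where
  "alpha11 H r = (r \<bullet> (H *v r)) / (r \<bullet> ((H ** H) *v r))"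

primrec resid :: "real^'m^'m \<Rightarrow> real^'m \<Rightarrow> nat \<Rightarrow> real^'m" where
  "resid H r0 0 = r0"
| "resid H r0 (Suc k) = F1 H (resid H r0 k)"

text \<open>Solution iterates x_k = x_{k-1} + alpha_{1,1}(r_{k-1}) D(r_{k-1}),
  with D r = A^T r (case H = A A^T) or D r = r (case H = A).\<close>
primrec iter_x :: "real^'m^'m \<Rightarrow> (real^'m \<Rightarrow> real^'n) \<Rightarrow> real^'n \<Rightarrow> real^'m \<Rightarrow> nat \<Rightarrow> real^'n" where
  "iter_x H D x0 r0 0 = x0"
| "iter_x H D x0 r0 (Suc k) =
     iter_x H D x0 r0 k + alpha11 H (resid H r0 k) *\<^sub>R D (resid H r0 k)"

end

theory Submission
  imports Defs
begin

text \<open>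
  For symmetric positive semidefinite H one step of F1 gives
  norm (F1 r)^2 = norm r^2 - (r'Hr)^2 / norm (Hr)^2. Since norm (Hr)^2 \<le> \<lambda>max r'Hr, each
  step removes at least r'Hr / \<lambda>max \<ge> c(H) r'Hr, which telescopes to (IV) and yields (V).
  If Ax = b is solvable, every residual lies in range A, an H-invariant subspace on which
  r'Hr \<ge> \<lambda>min+ norm r^2; Kantorovich's inequality then bounds the step by the factor
  (\<kappa>+ - 1)/(\<kappa>+ + 1), giving (II), and (III) follows from ln q \<le> q - 1.
  The spectral facts needed (finitely many eigenvalues, \<lambda>max and \<lambda>min+ as extreme
  Rayleigh quotients on invariant subspaces) come from maximising the Rayleigh quotient over a
  compact sphere, so no spectral theorem is used.
\<close>

lemma quadratic_nonneg_imp_discriminant_le: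
  fixes a b c :: real
  assumes nonneg: "\<And>t. 0 \<le> a + 2*b*t + c*t^2" and "0 \<le> c"
  shows "b^2 \<le> a*c"
proof (cases "c = 0")
  case True
  show ?thesis
  proof (rule ccontr)
    assume "\<not> ?thesis"
    then have "b \<noteq> 0" using True by auto
    have "0 \<le> a + 2*b*(-(\<bar>a\<bar>+1)/(2*b)) + c*(-(\<bar>a\<bar>+1)/(2*b))^2" by (rule nonneg)
    also have "\<dots> = a - (\<bar>a\<bar>+1)" using True \<open>b \<noteq> 0\<close> by (simp add: field_simps)
    finally show False by linarith
  qed
next
  case False
  then have "c > 0" using \<open>0 \<le> c\<close> by auto
  have "0 \<le> a + 2*b*(-b/c) + c*(-b/c)^2" by (rule nonneg)
  also have "\<dots> = a - b^2/c" using \<open>c > 0\<close> by (simp add: field_simps power2_eq_square)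
  finally show ?thesis using \<open>c > 0\<close> by (simp add: divide_le_eq mult.commute)
qed

lemma kantorovich_decrease:
  fixes h n a m M :: real
  assumes K: "h + m*M*n \<le> (M+m)*a" and "0 < h" "0 \<le> n" "0 < m" "m \<le> M"
  shows "n - a^2/h \<le> ((M-m)/(M+m))^2 * n"
proof -
  have "4*m*M*h*n \<le> (h + m*M*n)^2"
    using zero_le_power2[of "h - m*M*n"] by (simp add: power2_eq_square algebra_simps)
  also have "\<dots> \<le> ((M+m)*a)^2"
    using K assms by (intro power_mono) (auto intro: add_nonneg_nonneg)
  finally have "4*m*M*n/(M+m)^2 \<le> a^2/h"
    using assms by (simp add: divide_simps mult_ac)
  moreover have "n - 4*m*M*n/(M+m)^2 = ((M+m)^2*n - 4*m*M*n)/(M+m)^2"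
    using assms by (simp add: diff_divide_distrib)
  moreover have "(M+m)^2*n - 4*m*M*n = (M-m)^2*n" by (simp add: power2_eq_square algebra_simps)
  ultimately show ?thesis by (simp add: power_divide)
qed

locale selfadjoint =
  fixes f :: "'a::euclidean_space \<Rightarrow> 'a"
  assumes lin: "linear f" and inner_apply_commute: "\<And>x y. f x \<bullet> y = x \<bullet> f y"
begin

lemma apply_add: "f (x + y) = f x + f y"
  using lin by (simp add: linear_add)

lemma apply_scaleR: "f (c *\<^sub>R x) = c *\<^sub>R f x"
  using lin by (simp add: linear_scale)

lemma selfadjoint_uminus: "selfadjoint (\<lambda>x. - f x)"
  by unfold_locales (auto simp: linear_iff apply_add apply_scaleR inner_apply_commute)

lemma selfadjoint_minus_scaleR: "selfadjoint (\<lambda>x. f x - c *\<^sub>R x)"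
  by unfold_locales
    (auto simp: linear_iff apply_add apply_scaleR algebra_simps inner_apply_commute)

lemma quadratic_form_cauchy_schwarz:
  assumes S: "subspace S" and psd: "\<And>x. x \<in> S \<Longrightarrow> 0 \<le> x \<bullet> f x"
    and x: "x \<in> S" and y: "y \<in> S"
  shows "(y \<bullet> f x)^2 \<le> (y \<bullet> f y) * (x \<bullet> f x)"
proof (rule quadratic_nonneg_imp_discriminant_le)
  fix t :: real
  have "y + t *\<^sub>R x \<in> S" using S x y by (simp add: subspace_add subspace_scale)
  then have "0 \<le> (y + t *\<^sub>R x) \<bullet> f (y + t *\<^sub>R x)" by (rule psd)
  also have "\<dots> = y \<bullet> f y + 2 * (y \<bullet> f x) * t + (x \<bullet> f x) * t^2"
    using inner_apply_commute[of y x]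
    by (simp add: apply_add apply_scaleR inner_commute power2_eq_square algebra_simps)
  finally show "0 \<le> y \<bullet> f y + 2 * (y \<bullet> f x) * t + (x \<bullet> f x) * t^2" .
qed (rule psd[OF x])

lemma quadratic_form_eq_0_imp_apply_eq_0:
  assumes S: "subspace S" and psd: "\<And>x. x \<in> S \<Longrightarrow> 0 \<le> x \<bullet> f x"
    and inv: "\<And>x. x \<in> S \<Longrightarrow> f x \<in> S" and x: "x \<in> S" and "x \<bullet> f x = 0"
  shows "f x = 0"
  using quadratic_form_cauchy_schwarz[OF S psd x inv[OF x]] \<open>x \<bullet> f x = 0\<close> by simp

lemma norm_apply_squared_le:
  assumes S: "subspace S" and psd: "\<And>x. x \<in> S \<Longrightarrow> 0 \<le> x \<bullet> f x"
    and inv: "\<And>x. x \<in> S \<Longrightarrow> f x \<in> S"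
    and upper: "\<And>x. x \<in> S \<Longrightarrow> x \<bullet> f x \<le> c * (norm x)^2" and x: "x \<in> S"
  shows "(norm (f x))^2 \<le> c * (x \<bullet> f x)"
proof (cases "f x = 0")
  case False
  have "((norm (f x))^2)^2 = (f x \<bullet> f x)^2" by (simp add: power2_norm_eq_inner)
  also have "\<dots> \<le> (f x \<bullet> f (f x)) * (x \<bullet> f x)"
    by (rule quadratic_form_cauchy_schwarz[OF S psd x inv[OF x]])
  also have "\<dots> \<le> (c * (norm (f x))^2) * (x \<bullet> f x)"
    using upper[OF inv[OF x]] psd[OF x] by (rule mult_right_mono)
  finally show ?thesis
    using False by (simp add: power2_eq_square mult_le_cancel_left algebra_simps)
qed simp

text \<open>The maximiser v of the Rayleigh quotient is an eigenvector because the positive semidefinite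
  form of \<nu> - f vanishes at v.\<close>
lemma rayleigh_max:
  assumes S: "subspace S" and inv: "\<And>x. x \<in> S \<Longrightarrow> f x \<in> S" and "v0 \<in> S" "v0 \<noteq> 0"
  obtains v \<nu> where "v \<in> S" "v \<noteq> 0" "f v = \<nu> *\<^sub>R v" "\<And>x. x \<in> S \<Longrightarrow> x \<bullet> f x \<le> \<nu> * (norm x)^2"
proof -
  let ?K = "S \<inter> sphere 0 1"
  have "compact ?K" using closed_Int_compact[OF closed_subspace[OF S] compact_sphere] .
  moreover have "v0 /\<^sub>R norm v0 \<in> ?K" using \<open>v0 \<in> S\<close> \<open>v0 \<noteq> 0\<close> S by (simp add: subspace_scale)
  then have "?K \<noteq> {}" by blast
  moreover have "continuous_on ?K (\<lambda>x. x \<bullet> f x)"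
    using lin by (intro continuous_intros linear_continuous_on) (simp add: linear_conv_bounded_linear)
  ultimately obtain v where v: "v \<in> ?K" and vmax: "\<And>y. y \<in> ?K \<Longrightarrow> y \<bullet> f y \<le> v \<bullet> f v"
    using continuous_attains_sup by metis
  define \<nu> where "\<nu> = v \<bullet> f v"
  have upper: "x \<bullet> f x \<le> \<nu> * (norm x)^2" if x: "x \<in> S" for x
  proof (cases "x = 0")
    case True then show ?thesis using lin by (simp add: linear_0)
  next
    case False
    have "x /\<^sub>R norm x \<in> ?K" using x S False by (simp add: subspace_scale)
    then have "(x /\<^sub>R norm x) \<bullet> f (x /\<^sub>R norm x) \<le> \<nu>" unfolding \<nu>_def by (rule vmax)
    then have "(x \<bullet> f x) / (norm x)^2 \<le> \<nu>"
      by (simp add: apply_scaleR power2_eq_square divide_inverse mult_ac)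
    then show ?thesis using False by (simp add: divide_le_eq mult.commute)
  qed
  interpret g: selfadjoint "\<lambda>x. - (f x - \<nu> *\<^sub>R x)"
    using selfadjoint.selfadjoint_uminus[OF selfadjoint_minus_scaleR] .
  have "v \<in> S" "norm v = 1" using v by auto
  have "- (f v - \<nu> *\<^sub>R v) = 0"
  proof (rule g.quadratic_form_eq_0_imp_apply_eq_0[OF S _ _ \<open>v \<in> S\<close>])
    show "0 \<le> x \<bullet> - (f x - \<nu> *\<^sub>R x)" if "x \<in> S" for x
      using upper[OF that] by (simp add: inner_diff_right power2_norm_eq_inner)
    show "- (f x - \<nu> *\<^sub>R x) \<in> S" if "x \<in> S" for x
      using inv[OF that] that S by (simp add: subspace_neg subspace_diff subspace_scale)
    show "v \<bullet> - (f v - \<nu> *\<^sub>R v) = 0"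
      using \<open>norm v = 1\<close> by (simp add: inner_diff_right \<nu>_def flip: power2_norm_eq_inner)
  qed
  then have "f v = \<nu> *\<^sub>R v" by simp
  moreover have "v \<noteq> 0" using \<open>norm v = 1\<close> by auto
  ultimately show thesis using that \<open>v \<in> S\<close> upper by blast
qed

text \<open>Kantorovich's inequality in operator form: it says that (f - m)(M - f) is positive
  semidefinite on S.\<close>
lemma kantorovich_bound:
  assumes S: "subspace S" and inv: "\<And>x. x \<in> S \<Longrightarrow> f x \<in> S"
    and lower: "\<And>x. x \<in> S \<Longrightarrow> m * (norm x)^2 \<le> x \<bullet> f x"
    and upper: "\<And>x. x \<in> S \<Longrightarrow> x \<bullet> f x \<le> M * (norm x)^2" and x: "x \<in> S"
  shows "(norm (f x))^2 + m * M * (norm x)^2 \<le> (M + m) * (x \<bullet> f x)"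
proof -
  interpret g: selfadjoint "\<lambda>x. f x - m *\<^sub>R x" by (rule selfadjoint_minus_scaleR)
  have "(norm (f x - m *\<^sub>R x))^2 \<le> (M - m) * (x \<bullet> (f x - m *\<^sub>R x))"
  proof (rule g.norm_apply_squared_le[OF S _ _ _ x])
    show "0 \<le> y \<bullet> (f y - m *\<^sub>R y)" if "y \<in> S" for y
      using lower[OF that] by (simp add: inner_diff_right power2_norm_eq_inner)
    show "f y - m *\<^sub>R y \<in> S" if "y \<in> S" for y
      using inv[OF that] that S by (simp add: subspace_diff subspace_scale)
    show "y \<bullet> (f y - m *\<^sub>R y) \<le> (M - m) * (norm y)^2" if "y \<in> S" for y
      using upper[OF that] by (simp add: power2_norm_eq_inner algebra_simps)
  qed
  then show ?thesis
    by (simp add: power2_norm_eq_inner inner_commute[of "f x" x]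
        algebra_simps)
qed

end

definition lambda_min_pos :: "real^'m^'m \<Rightarrow> real" where
  "lambda_min_pos H = Min {l \<in> eigvals H. l > 0}"

lemma kappa_plus_eq: "kappa_plus H = lambda_max H / lambda_min_pos H"
  by (simp add: kappa_plus_def lambda_min_pos_def)

lemma resid_eq_residual:
  assumes "\<And>v. A *v D v = H *v v"
  shows "resid H (b - A *v x0) k = b - A *v iter_x H D x0 (b - A *v x0) k"
  by (induction k) (simp_all add: assms F1_def alpha11_def algebra_simps)

lemma kappa_rate_pow_le:
  fixes \<kappa> n0 \<epsilon> :: real
  assumes "1 \<le> \<kappa>" "0 \<le> n0" "0 < \<epsilon>" and k: "\<kappa> * ln (n0 / \<epsilon>) \<le> real k"
  shows "((\<kappa> - 1) / (\<kappa> + 1)) ^ k * n0 \<le> \<epsilon>"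
proof -
  define q where "q = (\<kappa> - 1) / (\<kappa> + 1)"
  have "0 \<le> q" "q < 1" using assms by (auto simp: q_def divide_simps)
  show ?thesis
  proof (cases "n0 \<le> \<epsilon>")
    case True
    have "q ^ k * n0 \<le> n0" using \<open>0 \<le> q\<close> \<open>q < 1\<close> \<open>0 \<le> n0\<close>
      by (simp add: mult_left_le_one_le power_le_one)
    then show ?thesis using True q_def by simp
  next
    case False
    then have "0 < n0" using assms by simp
    define L where "L = ln (n0 / \<epsilon>)"
    have "0 < L" using False assms unfolding L_def by simp
    have "q ^ k \<le> \<epsilon> / n0"
    proof (cases "q = 0")
      case True
      have "0 < \<kappa> * L" using \<open>0 < L\<close> \<open>1 \<le> \<kappa>\<close> by simp
      then have "0 < k" using k unfolding L_def[symmetric] by linarith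
      then show ?thesis using True assms by (simp add: power_0_left)
    next
      case False
      then have "0 < q" using \<open>0 \<le> q\<close> by simp
      have "ln q \<le> q - 1" using \<open>0 < q\<close> by (rule ln_le_minus_one)
      also have "\<dots> = - 2 / (\<kappa> + 1)" using assms by (simp add: q_def field_simps)
      also have "\<dots> \<le> - 1 / \<kappa>" using assms by (simp add: divide_simps)
      finally have "real k * ln q \<le> real k * (- 1 / \<kappa>)" by (rule mult_left_mono) simp
      also have "\<dots> \<le> - L" using k assms unfolding L_def[symmetric] by (simp add: divide_simps mult.commute)
      finally have "exp (real k * ln q) \<le> exp (- L)" by simp
      then show ?thesis using \<open>0 < q\<close> \<open>0 < n0\<close> assms by (simp add: L_def exp_of_nat_mult exp_minus)
    qed
    then show ?thesis using \<open>0 < n0\<close> q_def by (simp add: le_divide_eq)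
  qed
qed

locale psd_matrix =
  fixes H :: "real^'m^'m"
  assumes sym_psd: "sym_psd H"
begin

lemma symmetric: "transpose H = H"
  using sym_psd by (simp add: sym_psd_def)

lemma psd: "0 \<le> x \<bullet> (H *v x)"
  using sym_psd by (simp add: sym_psd_def)

lemma inner_mult_commute: "(H *v x) \<bullet> y = x \<bullet> (H *v y)"
  by (metis dot_lmul_matrix symmetric transpose_matrix_vector)

sublocale sa: selfadjoint "(*v) H"
  by (rule selfadjoint.intro) (simp_all add: inner_mult_commute)

lemma finite_eigvals: "finite (eigvals H)"
proof (rule ccontr)
  assume "\<not> finite (eigvals H)"
  then obtain T where T: "finite T" "card T = DIM(real^'m) + 1" "T \<subseteq> eigvals H"
    using infinite_arbitrarily_large by metis
  have "\<forall>l\<in>T. \<exists>v. v \<noteq> 0 \<and> H *v v = l *\<^sub>R v" using T(3) by (auto simp: eigvals_def)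
  then obtain ev where ev: "\<And>l. l \<in> T \<Longrightarrow> ev l \<noteq> 0 \<and> H *v ev l = l *\<^sub>R ev l"
    by metis
  have "inj_on ev T"
  proof (rule inj_onI)
    fix l1 l2 assume "l1 \<in> T" "l2 \<in> T" "ev l1 = ev l2"
    then have "l1 *\<^sub>R ev l1 = l2 *\<^sub>R ev l1" using ev by metis
    then show "l1 = l2" using ev[OF \<open>l1 \<in> T\<close>] by simp
  qed
  have "pairwise orthogonal (ev ` T)"
  proof (clarsimp simp: pairwise_def orthogonal_def)
    fix l1 l2 assume l: "l1 \<in> T" "l2 \<in> T" "ev l1 \<noteq> ev l2"
    have "l1 * (ev l1 \<bullet> ev l2) = (H *v ev l1) \<bullet> ev l2" using ev[OF l(1)] by simp
    also have "\<dots> = ev l1 \<bullet> (H *v ev l2)" by (rule inner_mult_commute)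
    also have "\<dots> = l2 * (ev l1 \<bullet> ev l2)" using ev[OF l(2)] by simp
    finally show "ev l1 \<bullet> ev l2 = 0" using l by auto
  qed
  moreover have "0 \<notin> ev ` T" using ev by auto
  ultimately have "card (ev ` T) \<le> DIM(real^'m)"
    using pairwise_orthogonal_independent independent_bound by blast
  with \<open>inj_on ev T\<close> T(2) show False by (simp add: card_image)
qed

lemma eigval_le_rayleigh_bound:
  assumes "l \<in> eigvals H" and bound: "\<And>x. x \<bullet> (H *v x) \<le> c * (norm x)^2"
  shows "l \<le> c"
proof -
  obtain w where w: "w \<noteq> 0" "H *v w = l *\<^sub>R w" using assms(1) by (auto simp: eigvals_def)
  have "l * (norm w)^2 = w \<bullet> (H *v w)" using w by (simp add: power2_norm_eq_inner)
  also have "\<dots> \<le> c * (norm w)^2" by (rule bound)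
  finally show ?thesis using w by simp
qed

lemma rayleigh_le_lambda_max: "x \<bullet> (H *v x) \<le> lambda_max H * (norm x)^2"
proof -
  obtain v \<nu> where v: "v \<noteq> 0" "H *v v = \<nu> *\<^sub>R v"
    and bound: "\<And>x. x \<bullet> (H *v x) \<le> \<nu> * (norm x)^2"
    by (rule sa.rayleigh_max[of UNIV "axis undefined 1"]) (auto intro: that)
  have "lambda_max H = \<nu>"
    unfolding lambda_max_def
  proof (rule Max_eqI[OF finite_eigvals])
    show "l \<le> \<nu>" if "l \<in> eigvals H" for l using that bound by (rule eigval_le_rayleigh_bound)
    show "\<nu> \<in> eigvals H" using v by (auto simp: eigvals_def)
  qed
  then show ?thesis using bound by simp
qed

lemma norm_mult_squared_le_lambda_max: "(norm (H *v x))^2 \<le> lambda_max H * (x \<bullet> (H *v x))"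
  by (rule sa.norm_apply_squared_le[of UNIV]) (simp_all add: psd rayleigh_le_lambda_max)

lemma norm_mult_squared_le_onorm: "(norm (H *v x))^2 \<le> onorm ((*v) H) * (x \<bullet> (H *v x))"
proof (rule sa.norm_apply_squared_le[of UNIV])
  fix y :: "real^'m"
  have "y \<bullet> (H *v y) \<le> norm y * norm (H *v y)" by (rule norm_cauchy_schwarz)
  also have "\<dots> \<le> norm y * (onorm ((*v) H) * norm y)" by (intro mult_left_mono onorm) simp_all
  finally show "y \<bullet> (H *v y) \<le> onorm ((*v) H) * (norm y)^2" by (simp add: power2_eq_square mult_ac)
qed (simp_all add: psd)

lemma mult_mult_eq_0_iff: "H *v (H *v x) = 0 \<longleftrightarrow> H *v x = 0"
  using inner_mult_commute[of x "H *v x"] by auto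

lemma positive_eigval_le_rayleigh:
  assumes S: "subspace S" and inv: "\<And>x. x \<in> S \<Longrightarrow> H *v x \<in> S"
    and inj: "\<And>x. x \<in> S \<Longrightarrow> H *v x = 0 \<Longrightarrow> x = 0" and "v0 \<in> S" "v0 \<noteq> 0"
  obtains \<mu> where "\<mu> \<in> eigvals H" "0 < \<mu>" "\<And>x. x \<in> S \<Longrightarrow> \<mu> * (norm x)^2 \<le> x \<bullet> (H *v x)"
proof -
  interpret neg: selfadjoint "\<lambda>x. - (H *v x)" by (rule sa.selfadjoint_uminus)
  have "- (H *v x) \<in> S" if "x \<in> S" for x using inv[OF that] S by (simp add: subspace_neg)
  then obtain v \<nu> where v: "v \<in> S" "v \<noteq> 0" "- (H *v v) = \<nu> *\<^sub>R v"
    and bound: "\<And>x. x \<in> S \<Longrightarrow> x \<bullet> - (H *v x) \<le> \<nu> * (norm x)^2"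
    using neg.rayleigh_max[OF S _ \<open>v0 \<in> S\<close> \<open>v0 \<noteq> 0\<close>] by blast
  define \<mu> where "\<mu> = - \<nu>"
  have Hv: "H *v v = \<mu> *\<^sub>R v" using v(3) unfolding \<mu>_def by (metis minus_minus scaleR_minus_left)
  show thesis
  proof (rule that)
    show "\<mu> \<in> eigvals H" unfolding eigvals_def using Hv \<open>v \<noteq> 0\<close> by blast
    have "0 \<le> \<mu> * (norm v)^2" using psd[of v] Hv by (simp add: power2_norm_eq_inner)
    moreover have "\<mu> \<noteq> 0" using Hv inj[OF \<open>v \<in> S\<close>] \<open>v \<noteq> 0\<close> by force
    ultimately show "0 < \<mu>" using \<open>v \<noteq> 0\<close> by (simp add: zero_le_mult_iff)
    show "\<mu> * (norm x)^2 \<le> x \<bullet> (H *v x)" if "x \<in> S" for x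
      using bound[OF that] unfolding \<mu>_def by simp
  qed
qed

lemma lambda_min_pos_le_rayleigh:
  assumes S: "subspace S" and inv: "\<And>x. x \<in> S \<Longrightarrow> H *v x \<in> S"
    and inj: "\<And>x. x \<in> S \<Longrightarrow> H *v x = 0 \<Longrightarrow> x = 0" and x: "x \<in> S"
  shows "lambda_min_pos H * (norm x)^2 \<le> x \<bullet> (H *v x)"
proof (cases "x = 0")
  case False
  then obtain \<mu> where "\<mu> \<in> eigvals H" "0 < \<mu>" "\<mu> * (norm x)^2 \<le> x \<bullet> (H *v x)"
    using positive_eigval_le_rayleigh[OF S inv inj x] x by metis
  moreover have "lambda_min_pos H \<le> \<mu>"
    unfolding lambda_min_pos_def using finite_eigvals \<open>\<mu> \<in> eigvals H\<close> \<open>0 < \<mu>\<close> by simp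
  then have "lambda_min_pos H * (norm x)^2 \<le> \<mu> * (norm x)^2" by (simp add: mult_right_mono)
  ultimately show ?thesis by linarith
qed simp

lemma range_mult_subspace: "subspace (range ((*v) H))"
  by (simp add: linear_subspace_image)

lemma lambda_min_pos_bounds:
  assumes "H \<noteq> 0"
  shows "0 < lambda_min_pos H" "lambda_min_pos H \<le> lambda_max H"
proof -
  let ?P = "{l \<in> eigvals H. l > 0}"
  have "\<exists>v. H *v v \<noteq> 0" using assms matrix_eq[of H 0] by simp
  then obtain v where "H *v v \<noteq> 0" by blast
  obtain \<mu> where "\<mu> \<in> ?P"
  proof (rule positive_eigval_le_rayleigh[OF range_mult_subspace])
    show "H *v v \<in> range ((*v) H)" by simp
    show "H *v v \<noteq> 0" by fact
  qed (auto intro: that simp: mult_mult_eq_0_iff)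
  have "finite ?P" using finite_eigvals by simp
  then have "lambda_min_pos H \<in> ?P" "lambda_min_pos H \<le> \<mu>"
    unfolding lambda_min_pos_def using Min_in Min_le \<open>\<mu> \<in> ?P\<close> by blast+
  moreover have "\<mu> \<le> lambda_max H"
    using \<open>\<mu> \<in> ?P\<close> rayleigh_le_lambda_max eigval_le_rayleigh_bound by blast
  ultimately show "0 < lambda_min_pos H" "lambda_min_pos H \<le> lambda_max H" by auto
qed

lemma c_H_bounds:
  assumes "H \<noteq> 0"
  shows "0 < c_H H" "c_H H * lambda_max H \<le> 1"
proof -
  have m: "0 < lambda_min_pos H" "lambda_min_pos H \<le> lambda_max H"
    using lambda_min_pos_bounds[OF assms] .
  then have "c_H H = lambda_min_pos H / (lambda_max H)^2"
    by (simp add: c_H_def kappa_plus_eq power2_eq_square)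
  with m show "0 < c_H H" "c_H H * lambda_max H \<le> 1"
    by (simp_all add: power2_eq_square)
qed

lemma kappa_plus_ge_1: "H \<noteq> 0 \<Longrightarrow> 1 \<le> kappa_plus H"
  using lambda_min_pos_bounds by (simp add: kappa_plus_eq)

lemma norm_F1_squared:
  "(norm (F1 H r))^2 = (norm r)^2 - (r \<bullet> (H *v r))^2 / (norm (H *v r))^2"
proof -
  define a h where "a = r \<bullet> (H *v r)" and "h = (norm (H *v r))^2"
  have "r \<bullet> ((H ** H) *v r) = h"
    unfolding h_def by (simp add: inner_mult_commute power2_norm_eq_inner flip: matrix_vector_mul_assoc)
  then have F1: "F1 H r = r - (a/h) *\<^sub>R (H *v r)" unfolding F1_def a_def by simp
  have hh: "(H *v r) \<bullet> (H *v r) = h" unfolding h_def by (simp add: power2_norm_eq_inner)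
  have ra: "(H *v r) \<bullet> r = a" "r \<bullet> (H *v r) = a" unfolding a_def by (simp_all add: inner_commute)
  have "(norm (F1 H r))^2 = (norm r)^2 - 2 * (a/h) * a + (a/h)^2 * h"
    unfolding power2_norm_eq_inner F1
    by (simp add: ra hh power2_eq_square algebra_simps)
  also have "\<dots> = (norm r)^2 - a^2/h"
    by (cases "h = 0") (simp_all add: field_simps power2_eq_square)
  finally show ?thesis unfolding a_def h_def .
qed

lemma norm_F1_squared_le:
  assumes "H \<noteq> 0"
  shows "(norm (F1 H r))^2 \<le> (norm r)^2 - c_H H * (r \<bullet> (H *v r))"
proof -
  define a h M where "a = r \<bullet> (H *v r)" and "h = (norm (H *v r))^2" and "M = lambda_max H"
  have "h \<le> M * a" unfolding a_def h_def M_def by (rule norm_mult_squared_le_lambda_max)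
  have "c_H H * a \<le> a^2 / h"
  proof (cases "h = 0")
    case False
    then have "0 < h" unfolding h_def by simp
    have "0 < c_H H" "c_H H * M \<le> 1" using c_H_bounds[OF assms] unfolding M_def by auto
    have "0 \<le> a" unfolding a_def by (rule psd)
    have "c_H H * h \<le> c_H H * M * a"
      using \<open>h \<le> M * a\<close> \<open>0 < c_H H\<close> by (simp add: mult.assoc)
    also have "\<dots> \<le> a" using mult_right_mono[OF \<open>c_H H * M \<le> 1\<close> \<open>0 \<le> a\<close>] by simp
    finally have "a * (c_H H * h) \<le> a * a" using \<open>0 \<le> a\<close> by (rule mult_left_mono)
    then show ?thesis using \<open>0 < h\<close> by (simp add: le_divide_eq power2_eq_square mult_ac)
  qed (simp add: a_def h_def)
  then show ?thesis using norm_F1_squared[of r] unfolding a_def h_def by simp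
qed

lemma norm_F1_le_contraction:
  assumes S: "subspace S" and inv: "\<And>x. x \<in> S \<Longrightarrow> H *v x \<in> S"
    and inj: "\<And>x. x \<in> S \<Longrightarrow> H *v x = 0 \<Longrightarrow> x = 0" and r: "r \<in> S"
  shows "norm (F1 H r) \<le> (kappa_plus H - 1) / (kappa_plus H + 1) * norm r"
proof (cases "r = 0")
  case False
  define m M where "m = lambda_min_pos H" and "M = lambda_max H"
  have "H *v r \<noteq> 0" using inj[OF r] False by blast
  then have "H \<noteq> 0" by auto
  then have m: "0 < m" "m \<le> M" using lambda_min_pos_bounds unfolding m_def M_def by auto
  have "M / m - 1 = (M - m) / m" "M / m + 1 = (M + m) / m" using m by (simp_all add: field_simps)
  then have q: "(kappa_plus H - 1) / (kappa_plus H + 1) = (M - m) / (M + m)"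
    using m by (simp add: kappa_plus_eq flip: m_def M_def)
  have "(norm (H *v r))^2 + m * M * (norm r)^2 \<le> (M + m) * (r \<bullet> (H *v r))"
    using sa.kantorovich_bound[OF S inv lambda_min_pos_le_rayleigh[OF S inv inj]
        rayleigh_le_lambda_max r]
    unfolding m_def M_def .
  then have "(norm (F1 H r))^2 \<le> ((M - m) / (M + m))^2 * (norm r)^2"
    unfolding norm_F1_squared using \<open>H *v r \<noteq> 0\<close> m
    by (intro kantorovich_decrease) (auto simp: algebra_simps)
  then have "(norm (F1 H r))^2 \<le> ((M - m) / (M + m) * norm r)^2"
    by (simp only: power_mult_distrib)
  then show ?thesis unfolding q by (rule power2_le_imp_le) (use m in simp)
qed (simp add: F1_def)


lemma resid_in_subspace:
  assumes S: "subspace S" and inv: "\<And>x. x \<in> S \<Longrightarrow> H *v x \<in> S" and "r0 \<in> S"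
  shows "resid H r0 k \<in> S"
  by (induction k) (simp_all add: assms F1_def subspace_diff subspace_scale)

lemma norm_resid_le_geometric:
  assumes S: "subspace S" and inv: "\<And>x. x \<in> S \<Longrightarrow> H *v x \<in> S"
    and inj: "\<And>x. x \<in> S \<Longrightarrow> H *v x = 0 \<Longrightarrow> x = 0" and r0: "r0 \<in> S"
  shows "norm (resid H r0 k) \<le> ((kappa_plus H - 1) / (kappa_plus H + 1)) ^ k * norm r0"
proof (cases "r0 = 0")
  case True
  then have "resid H r0 k = 0" by (induction k) (simp_all add: F1_def)
  then show ?thesis using True by simp
next
  case False
  let ?q = "(kappa_plus H - 1) / (kappa_plus H + 1)"
  have "H \<noteq> 0" using inj[OF r0] False by auto
  then have "1 \<le> kappa_plus H" by (rule kappa_plus_ge_1)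
  then have "0 \<le> ?q" by simp
  show ?thesis
  proof (induction k)
    case (Suc k)
    have "norm (resid H r0 (Suc k)) \<le> ?q * norm (resid H r0 k)"
      unfolding resid.simps by (rule norm_F1_le_contraction[OF S inv inj resid_in_subspace[OF S inv r0]])
    also have "\<dots> \<le> ?q * (?q ^ k * norm r0)" using Suc.IH \<open>0 \<le> ?q\<close> by (rule mult_left_mono)
    finally show ?case by (simp add: mult.assoc)
  qed simp
qed

lemma norm_resid_squared_le:
  assumes "H \<noteq> 0"
  shows "(norm (resid H r0 k))^2 \<le> (norm r0)^2 - c_H H * (\<Sum>j<k. resid H r0 j \<bullet> (H *v resid H r0 j))"
proof (induction k)
  case (Suc k)
  then show ?case using norm_F1_squared_le[OF assms, of "resid H r0 k"] by (simp add: algebra_simps)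
qed simp

lemma iteration_count_le:
  assumes "H \<noteq> 0" and "0 < \<epsilon>" and large: "\<And>j. j < k \<Longrightarrow> \<epsilon> < resid H r0 j \<bullet> (H *v resid H r0 j)"
  shows "real k \<le> kappa_plus H * lambda_max H * (norm r0)^2 / \<epsilon>"
proof -
  have "0 < c_H H" using c_H_bounds[OF assms(1)] by simp
  have "real k * \<epsilon> \<le> (\<Sum>j<k. resid H r0 j \<bullet> (H *v resid H r0 j))"
    using sum_bounded_below[of "{..<k}" \<epsilon>] large by (simp add: less_imp_le)
  then have "c_H H * (real k * \<epsilon>) \<le> c_H H * (\<Sum>j<k. resid H r0 j \<bullet> (H *v resid H r0 j))"
    using \<open>0 < c_H H\<close> by (rule mult_left_mono[OF _ less_imp_le])
  also have "\<dots> \<le> (norm r0)^2"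
    using norm_resid_squared_le[OF assms(1), of r0 k] zero_le_power2[of "norm (resid H r0 k)"] by linarith
  finally have "real k \<le> (norm r0)^2 / (c_H H * \<epsilon>)"
    using \<open>0 < c_H H\<close> \<open>0 < \<epsilon>\<close> by (simp add: le_divide_eq mult_ac)
  then show ?thesis by (simp add: c_H_def mult.commute)
qed

lemma norm_normal_residual_le:
  assumes "r = b - H *v x" and "r \<bullet> (H *v r) \<le> \<epsilon>"
  shows "norm ((transpose H ** H) *v x - transpose H *v b) \<le> sqrt \<epsilon> * sqrt (onorm ((*v) H))"
proof -
  have "(transpose H ** H) *v x - transpose H *v b = - (H *v r)"
    using assms(1) by (simp add: symmetric matrix_vector_mult_diff_distrib matrix_vector_mul_assoc
        del: transpose_matrix_vector)
  then have "(norm ((transpose H ** H) *v x - transpose H *v b))^2 \<le> onorm ((*v) H) * \<epsilon>"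
    using norm_mult_squared_le_onorm[of r] assms(2) onorm_pos_le[of "(*v) H"]
    by (auto intro: order_trans mult_left_mono)
  then show ?thesis by (simp add: real_le_rsqrt mult.commute flip: real_sqrt_mult)
qed

lemma steepest_descent_guarantees:
  fixes A :: "real^'n^'m" and D :: "real^'m \<Rightarrow> real^'n"
  assumes AD: "\<And>v. A *v D v = H *v v"
    and inv: "\<And>y. H *v (A *v y) \<in> range ((*v) A)"
    and inj: "\<forall>y. H *v (A *v y) = 0 \<longrightarrow> A *v y = 0"
    and r0: "r0 = b - A *v x0" and "H *v r0 \<noteq> 0"
  shows "resid H r0 k = b - A *v iter_x H D x0 r0 k"
    and "(\<exists>z. A *v z = b) \<Longrightarrow>
      norm (resid H r0 k) \<le> ((kappa_plus H - 1) / (kappa_plus H + 1)) ^ k * norm r0"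
    and "(\<exists>z. A *v z = b) \<Longrightarrow> 0 < \<epsilon> \<Longrightarrow> kappa_plus H * ln (norm r0 / \<epsilon>) \<le> real k \<Longrightarrow>
      norm (resid H r0 k) \<le> \<epsilon>"
    and "(norm (resid H r0 k))^2
      \<le> (norm r0)^2 - c_H H * (\<Sum>j<k. resid H r0 j \<bullet> (H *v resid H r0 j))"
    and "0 < \<epsilon> \<Longrightarrow> (\<forall>j<k. \<epsilon> < resid H r0 j \<bullet> (H *v resid H r0 j)) \<Longrightarrow>
      real k \<le> kappa_plus H * lambda_max H * (norm r0)^2 / \<epsilon>"
    and "norm (resid H r0 k) \<le> \<epsilon> \<Longrightarrow> norm (A *v iter_x H D x0 r0 k - b) \<le> \<epsilon>"
proof -
  have "H \<noteq> 0" using \<open>H *v r0 \<noteq> 0\<close> by auto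
  let ?S = "range ((*v) A)"
  have S: "subspace ?S" by (simp add: linear_subspace_image)
  have S_inv: "x \<in> ?S \<Longrightarrow> H *v x \<in> ?S" and S_inj: "x \<in> ?S \<Longrightarrow> H *v x = 0 \<Longrightarrow> x = 0" for x
    using inv inj by auto
  show residual: "resid H r0 k = b - A *v iter_x H D x0 r0 k"
    unfolding r0 by (rule resid_eq_residual[OF AD])
  then show "norm (A *v iter_x H D x0 r0 k - b) \<le> \<epsilon>" if "norm (resid H r0 k) \<le> \<epsilon>"
    using that by (simp add: norm_minus_commute)
  show geometric: "norm (resid H r0 k) \<le> ((kappa_plus H - 1) / (kappa_plus H + 1)) ^ k * norm r0"
    if "\<exists>z. A *v z = b"
  proof -
    from that obtain z where "A *v z = b" ..
    then have "r0 = A *v (z - x0)" unfolding r0 by (simp add: matrix_vector_mult_diff_distrib)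
    then have "r0 \<in> ?S" by (metis rangeI)
    then show ?thesis using norm_resid_le_geometric[OF S] S_inv S_inj by blast
  qed
  show "norm (resid H r0 k) \<le> \<epsilon>"
    if "\<exists>z. A *v z = b" "0 < \<epsilon>" "kappa_plus H * ln (norm r0 / \<epsilon>) \<le> real k"
    using geometric[OF that(1)] kappa_rate_pow_le[OF kappa_plus_ge_1[OF \<open>H \<noteq> 0\<close>] norm_ge_zero that(2,3)]
    by linarith
  show "(norm (resid H r0 k))^2
      \<le> (norm r0)^2 - c_H H * (\<Sum>j<k. resid H r0 j \<bullet> (H *v resid H r0 j))"
    by (rule norm_resid_squared_le[OF \<open>H \<noteq> 0\<close>])
  show "real k \<le> kappa_plus H * lambda_max H * (norm r0)^2 / \<epsilon>"
    if "0 < \<epsilon>" "\<forall>j<k. \<epsilon> < resid H r0 j \<bullet> (H *v resid H r0 j)"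
    using iteration_count_le[OF \<open>H \<noteq> 0\<close> that(1)] that(2) by blast
qed

end

lemma inner_transpose_mult: "(transpose A *v u) \<bullet> y = u \<bullet> (A *v y)" for A :: "real^'n^'m"
  by (metis dot_lmul_matrix transpose_matrix_vector)

lemma sym_psd_mult_transpose: "sym_psd (A ** transpose A)" for A :: "real^'n^'m"
proof -
  have "x \<bullet> ((A ** transpose A) *v x) = (transpose A *v x) \<bullet> (transpose A *v x)" for x
    by (simp only: inner_transpose_mult flip: matrix_vector_mul_assoc)
  then show ?thesis unfolding sym_psd_def by (simp add: matrix_transpose_mul del: transpose_matrix_vector)
qed

lemma mult_transpose_mult_eq_0_iff:
  fixes A :: "real^'n^'m"
  shows "(A ** transpose A) *v (A *v y) = 0 \<longleftrightarrow> A *v y = 0"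
proof
  assume "(A ** transpose A) *v (A *v y) = 0"
  define u where "u = transpose A *v (A *v y)"
  have "A *v u = 0" using \<open>_ = 0\<close> unfolding u_def by (simp add: matrix_vector_mul_assoc matrix_mul_assoc)
  then have "u = 0" using inner_transpose_mult[of A "A *v y" u] unfolding u_def by simp
  then show "A *v y = 0" using inner_transpose_mult[of A "A *v y" y] unfolding u_def by simp
qed simp

lemma norm_normal_residual_mult_transpose_le:
  fixes A :: "real^'n^'m"
  assumes "r = b - A *v x" and "r \<bullet> ((A ** transpose A) *v r) \<le> \<epsilon>"
  shows "norm ((transpose A ** A) *v x - transpose A *v b) \<le> sqrt \<epsilon>"
proof (rule real_le_rsqrt)
  have "(transpose A ** A) *v x - transpose A *v b = - (transpose A *v r)"
    using assms(1)
    by (simp add: matrix_vector_mult_diff_distrib matrix_vector_mul_assoc del: transpose_matrix_vector)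
  then show "(norm ((transpose A ** A) *v x - transpose A *v b))^2 \<le> \<epsilon>"
    using assms(2) by (simp add: power2_norm_eq_inner inner_transpose_mult matrix_vector_mul_assoc
        del: transpose_matrix_vector)
qed

theorem mainTheorem5:
  shows
  "(\<forall>(A::real^'n^'m) (b::real^'m) (w0::real^'m) (k::nat).
     let H = A ** transpose A;
         x0 = transpose A *v w0;
         r0 = b - A *v x0;
         r = resid H r0;
         x = iter_x H (\<lambda>v. transpose A *v v) x0 r0
     in (k \<ge> 1 \<and> (\<forall>j<k. H *v r j \<noteq> 0)) \<longrightarrow>
        (r k = b - A *v x k)
      \<and> ((\<exists>z. A *v z = b) \<longrightarrow>
            norm (r k) \<le> ((kappa_plus H - 1) / (kappa_plus H + 1)) ^ k * norm r0)
      \<and> (\<forall>\<epsilon>. (\<exists>z. A *v z = b) \<and> 0 < \<epsilon> \<and> \<epsilon> < 1 \<and>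
               real k \<ge> kappa_plus H * ln (norm r0 / \<epsilon>) \<longrightarrow> norm (r k) \<le> \<epsilon>)
      \<and> (norm (r k))\<^sup>2 \<le> (norm r0)\<^sup>2 - c_H H * (\<Sum>j<k. r j \<bullet> (H *v r j))
      \<and> (\<forall>\<epsilon>. 0 < \<epsilon> \<and> \<epsilon> < 1 \<and> (\<forall>j<k. r j \<bullet> (H *v r j) > \<epsilon>) \<longrightarrow>
               real k \<le> kappa_plus H * lambda_max H * (norm r0)\<^sup>2 / \<epsilon>)
      \<and> (\<forall>\<epsilon>. norm (r k) \<le> \<epsilon> \<longrightarrow> norm (A *v x k - b) \<le> \<epsilon>)
      \<and> (\<forall>\<epsilon>. r k \<bullet> (H *v r k) \<le> \<epsilon> \<longrightarrow>
               norm ((transpose A ** A) *v x k - transpose A *v b) \<le> sqrt \<epsilon>))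
   \<and>
   (\<forall>(A::real^'m^'m) (b::real^'m) (w0::real^'m) (k::nat).
     let H = A;
         x0 = transpose A *v w0;
         r0 = b - A *v x0;
         r = resid H r0;
         x = iter_x H (\<lambda>v. v) x0 r0
     in (sym_psd A \<and> k \<ge> 1 \<and> (\<forall>j<k. H *v r j \<noteq> 0)) \<longrightarrow>
        (r k = b - A *v x k)
      \<and> ((\<exists>z. A *v z = b) \<longrightarrow>
            norm (r k) \<le> ((kappa_plus H - 1) / (kappa_plus H + 1)) ^ k * norm r0)
      \<and> (\<forall>\<epsilon>. (\<exists>z. A *v z = b) \<and> 0 < \<epsilon> \<and> \<epsilon> < 1 \<and>
               real k \<ge> kappa_plus H * ln (norm r0 / \<epsilon>) \<longrightarrow> norm (r k) \<le> \<epsilon>)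
      \<and> (norm (r k))\<^sup>2 \<le> (norm r0)\<^sup>2 - c_H H * (\<Sum>j<k. r j \<bullet> (H *v r j))
      \<and> (\<forall>\<epsilon>. 0 < \<epsilon> \<and> \<epsilon> < 1 \<and> (\<forall>j<k. r j \<bullet> (H *v r j) > \<epsilon>) \<longrightarrow>
               real k \<le> kappa_plus H * lambda_max H * (norm r0)\<^sup>2 / \<epsilon>)
      \<and> (\<forall>\<epsilon>. norm (r k) \<le> \<epsilon> \<longrightarrow> norm (A *v x k - b) \<le> \<epsilon>)
      \<and> (\<forall>\<epsilon>. r k \<bullet> (H *v r k) \<le> \<epsilon> \<longrightarrow>
               norm ((transpose A ** A) *v x k - transpose A *v b)
                 \<le> sqrt \<epsilon> * sqrt (onorm (\<lambda>v. A *v v))))"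
proof (intro conjI allI, goal_cases)
  case (1 A b w0 k)
  let ?H = "A ** transpose A" and ?start = "transpose A *v w0"
  interpret psd_matrix ?H by unfold_locales (rule sym_psd_mult_transpose)
  have AD: "A *v (transpose A *v v) = ?H *v v" for v
    by (simp add: matrix_vector_mul_assoc del: transpose_matrix_vector)
  have inv: "?H *v (A *v y) \<in> range ((*v) A)" for y
    by (metis matrix_vector_mul_assoc rangeI)
  have inj: "\<forall>y. ?H *v (A *v y) = 0 \<longrightarrow> A *v y = 0"
    by (simp add: mult_transpose_mult_eq_0_iff)
  show ?case
  proof (unfold Let_def, intro impI, goal_cases)
    case 1
    then have "?H *v (b - A *v ?start) \<noteq> 0" by fastforce
    note G = steepest_descent_guarantees[OF AD inv inj refl this, where k = k]
    show ?case using G norm_normal_residual_mult_transpose_le[OF G(1)] by blast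
  qed
next
  case (2 A b w0 k)
  show ?case
  proof (unfold Let_def, intro impI, goal_cases)
    case 1
    then interpret psd_matrix A by unfold_locales blast
    have inj: "\<forall>y. A *v (A *v y) = 0 \<longrightarrow> A *v y = 0" by (simp add: mult_mult_eq_0_iff)
    from 1 have "A *v (b - A *v (transpose A *v w0)) \<noteq> 0" by fastforce
    note G = steepest_descent_guarantees[where D = "\<lambda>v. v", OF refl rangeI inj refl this, where k = k]
    show ?case using G norm_normal_residual_le[OF G(1)] by blast
  qed
qed

end
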